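(* Let $z^0\in X$, $\gamma\in(0,2)$, $\delta\in[0,1/2)$, and let $\{\sigma_k\},\{\eta_k\}$ be nonnegative with $\sum_k\eta_k<\infty$, $\inf_k\sigma_k>0$; let $z^{k+1}$ be an output of IGPPAstep$(z^k,\sigma_k,\eta_k,\delta,\gamma,M)$ for all $k\ge0$. Assume $T$ satisfies the bounded metric subregularity condition, let $\bar z^0$ be a point of $\Omega$ nearest to $z^0$ in $\|\cdot\|_M$, let $r\ge\|\bar z^0\|+\frac{1}{\lambda_{\min}(M)}(\operatorname{dist}_M(z^0,\Omega)+\gamma\sum_k\eta_k)$ and $\kappa_r>0$ with $\operatorname{dist}(z,\Omega)\le\kappa_r\operatorname{dist}(0,T(z))$ for $\|z\|\le r$. Let $\alpha>0$ be such that $\rho:=\frac{1}{1-\delta}\Big(\sqrt{1-\frac{\min\{\gamma,2\gamma-\gamma^2\}\alpha^2}{\alpha^2+1}}+\delta\big(\frac{\min\{\gamma,1\}}{\sqrt{\alpha^2+1}}+1\big)\Big)<1.$ If $\sigma_k\ge\kappa_r\alpha$ for all $k\ge0$, then $\operatorname{dist}_M(z^k,\Omega)\le\rho^k\operatorname{dist}_M(z^0,\Omega)$ for all $k\ge0$.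
   Context: $X$ is a finite-dimensional real Hilbert space; $T:X\rightrightarrows X$ is maximal monotone with $\Omega:=T^{-1}(0)\neq\emptyset$. $M$ is self-adjoint positive definite with $\lambda_{\max}(M)=1$; $\|z\|_M=\sqrt{\langle z,Mz\rangle}$, $\operatorname{dist}_M(z,D)=\min_{d\in D}\|d-z\|_M$, $\operatorname{dist}=\operatorname{dist}_I$. $\mathcal{J}_{\sigma M^{-1}T}:=(I+\sigma M^{-1}T)^{-1}$. $z^+$ is an output of IGPPAstep$(z,\sigma,\eta,\delta,\gamma,M)$ if $z^+=\gamma w+(1-\gamma)z$ for some $w$ with $\|w-\mathcal{J}_{\sigma M^{-1}T}(z)\|_M\le\min\{\eta,\delta\|w-z\|_M\}$. Bounded metric subregularity: for every $r>0$ there is $\kappa_r>0$ with $\operatorname{dist}(z,\Omega)\le\kappa_r\operatorname{dist}(0,T(z))$ for all $\|z\|\le r$. *)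

theory Defs
  imports "HOL-Analysis.Analysis"
begin

text \<open>Set-valued operators on a finite-dimensional real Hilbert space are modelled as
  functions T :: 'a \<Rightarrow> 'a set (graph: v \<in> T x).\<close>

definition monotone_operator :: "('a::euclidean_space \<Rightarrow> 'a set) \<Rightarrow> bool" where
  "monotone_operator T \<longleftrightarrow>
     (\<forall>x y u v. u \<in> T x \<longrightarrow> v \<in> T y \<longrightarrow> (x - y) \<bullet> (u - v) \<ge> 0)"

definition maximal_monotone :: "('a::euclidean_space \<Rightarrow> 'a set) \<Rightarrow> bool" where
  "maximal_monotone T \<longleftrightarrow> monotone_operator T \<and>
     (\<forall>x u. (\<forall>y v. v \<in> T y \<longrightarrow> (x - y) \<bullet> (u - v) \<ge> 0) \<longrightarrow> u \<in> T x)"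

definition zeros :: "('a::euclidean_space \<Rightarrow> 'a set) \<Rightarrow> 'a set" where
  "zeros T = {z. 0 \<in> T z}"

definition self_adjoint_pd :: "('a::euclidean_space \<Rightarrow> 'a) \<Rightarrow> bool" where
  "self_adjoint_pd M \<longleftrightarrow> linear M \<and> (\<forall>x y. M x \<bullet> y = x \<bullet> M y)
     \<and> (\<forall>x. x \<noteq> 0 \<longrightarrow> x \<bullet> M x > 0)"

definition eigenvalues_op :: "('a::euclidean_space \<Rightarrow> 'a) \<Rightarrow> real set" where
  "eigenvalues_op M = {l. \<exists>x. x \<noteq> 0 \<and> M x = l *\<^sub>R x}"

definition lambda_max :: "('a::euclidean_space \<Rightarrow> 'a) \<Rightarrow> real" where
  "lambda_max M = Sup (eigenvalues_op M)"

definition lambda_min :: "('a::euclidean_space \<Rightarrow> 'a) \<Rightarrow> real" where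
  "lambda_min M = Inf (eigenvalues_op M)"

definition normM :: "('a::euclidean_space \<Rightarrow> 'a) \<Rightarrow> 'a \<Rightarrow> real" where
  "normM M z = sqrt (z \<bullet> M z)"

definition distM :: "('a::euclidean_space \<Rightarrow> 'a) \<Rightarrow> 'a \<Rightarrow> 'a set \<Rightarrow> real" where
  "distM M z D = Inf {normM M (d - z) | d. d \<in> D}"

text \<open>Resolvent (I + sigma M^{-1} T)^{-1}(z): the point p with z \<in> p + sigma (M^{-1} T)(p),
  where (M^{-1} T)(p) = {w. M w \<in> T p}.\<close>
definition resolventM ::
  "('a::euclidean_space \<Rightarrow> 'a set) \<Rightarrow> ('a \<Rightarrow> 'a) \<Rightarrow> real \<Rightarrow> 'a \<Rightarrow> 'a" where
  "resolventM T M \<sigma> z = (THE p. \<exists>w. M w \<in> T p \<and> z = p + \<sigma> *\<^sub>R w)"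

definition igppa_step ::
  "('a::euclidean_space \<Rightarrow> 'a set) \<Rightarrow> ('a \<Rightarrow> 'a) \<Rightarrow> 'a \<Rightarrow> real \<Rightarrow> real \<Rightarrow> real \<Rightarrow> real \<Rightarrow> 'a \<Rightarrow> bool" where
  "igppa_step T M z \<sigma> \<eta> \<delta> \<gamma> z' \<longleftrightarrow>
     (\<exists>w. z' = \<gamma> *\<^sub>R w + (1 - \<gamma>) *\<^sub>R z \<and>
          normM M (w - resolventM T M \<sigma> z) \<le> min \<eta> (\<delta> * normM M (w - z)))"

text \<open>Metric subregularity estimate on the ball of radius r, with the convention
  dist(0, emptyset) = +infinity (points outside dom T impose no constraint).\<close>
definition subreg_on_ball :: "('a::euclidean_space \<Rightarrow> 'a set) \<Rightarrow> real \<Rightarrow> real \<Rightarrow> bool" where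
  "subreg_on_ball T r \<kappa> \<longleftrightarrow>
     (\<forall>z. norm z \<le> r \<and> T z \<noteq> {} \<longrightarrow> infdist z (zeros T) \<le> \<kappa> * infdist 0 (T z))"

definition bounded_metric_subregular :: "('a::euclidean_space \<Rightarrow> 'a set) \<Rightarrow> bool" where
  "bounded_metric_subregular T \<longleftrightarrow> (\<forall>r>0. \<exists>\<kappa>>0. subreg_on_ball T r \<kappa>)"

end

theory Submission
  imports Defs
begin

text \<open>Write \<open>J = (I + \<sigma> M\<^sup>-\<^sup>1T)\<^sup>-\<^sup>1\<close> and \<open>d(z) = dist\<^sub>M(z, \<Omega>)\<close>. The resolvent is
  firmly quasi-nonexpansive in \<open>\<parallel>\<cdot>\<parallel>\<^sub>M\<close>, \<open>d(J z)\<^sup>2 + \<parallel>z - J z\<parallel>\<^sub>M\<^sup>2 \<le> d(z)\<^sup>2\<close>, and since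
  \<open>M(z - J z)/\<sigma> \<in> T(J z)\<close> and \<open>\<sigma> \<ge> \<kappa>\<alpha>\<close>, subregularity at \<open>J z\<close> gives
  \<open>\<alpha> d(J z) \<le> \<parallel>z - J z\<parallel>\<^sub>M\<close>. These two inequalities make the exact relaxed step
  \<open>(1-\<gamma>)z + \<gamma> J z\<close> contract \<open>d\<close> by \<open>sqrt(1 - min{\<gamma>, 2\<gamma>-\<gamma>\<^sup>2} \<alpha>\<^sup>2/(\<alpha>\<^sup>2+1))\<close>
  (using convexity of \<open>\<Omega>\<close> when \<open>\<gamma> \<le> 1\<close>). The relative error criterion puts the actual
  iterate within \<open>\<gamma>\<delta>/(1-\<delta>) \<parallel>z - J z\<parallel>\<^sub>M \<le> \<gamma>\<delta>/(1-\<delta>) d(z)\<close> of the exact step, which is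
  absorbed into \<open>\<rho>\<close>. Subregularity applies at every \<open>J z\<^sub>k\<close> because the iterates are
  Fejer monotone up to the summable errors \<open>\<gamma>\<eta>\<^sub>k\<close>, which keeps all \<open>J z\<^sub>k\<close> in the ball of
  radius \<open>r\<close>. That \<open>J\<close> is well defined is Minty's theorem in the \<open>M\<close>-geometry, obtained
  from Brouwer's fixed point theorem and a compactness argument.\<close>

lemma linear_coeff_eq_0_if_quadratic_nonneg:
  fixes a b :: real
  assumes "\<And>t. 0 \<le> a * t^2 + b * t"
  shows "b = 0"
proof (rule ccontr)
  assume b: "b \<noteq> 0"
  define s where "s = 1 / (\<bar>a\<bar> + 1)"
  have s0: "s > 0" unfolding s_def by (simp add: add_pos_nonneg)
  have as: "a * s < 1" unfolding s_def by (simp add: field_simps)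
  have "0 \<le> a * (- b * s)^2 + b * (- b * s)" using assms by blast
  also have "\<dots> = b^2 * s * (a * s - 1)" by (simp add: power2_eq_square algebra_simps)
  also have "\<dots> < 0" using b s0 as by (simp add: mult_pos_neg)
  finally show False by simp
qed

lemma linear_rayleigh_quotient_attains_min:
  fixes N :: "'a::euclidean_space \<Rightarrow> 'a"
  assumes lin: "linear N"
  obtains x0 where "x0 \<bullet> x0 = 1" "\<And>x. (x0 \<bullet> N x0) * (x \<bullet> x) \<le> x \<bullet> N x"
proof -
  have cont: "continuous_on (sphere 0 1) (\<lambda>x. x \<bullet> N x)"
    using lin[unfolded linear_conv_bounded_linear] by (intro continuous_intros linear_continuous_on)
  obtain x0 where x0: "x0 \<in> sphere 0 1"
    and min: "\<And>y. y \<in> sphere 0 1 \<Longrightarrow> x0 \<bullet> N x0 \<le> y \<bullet> N y"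
    using continuous_attains_inf[OF compact_sphere _ cont] by force
  have "(x0 \<bullet> N x0) * (x \<bullet> x) \<le> x \<bullet> N x" for x
  proof (cases "x = 0")
    case False
    define y where "y = (1 / norm x) *\<^sub>R x"
    have "y \<in> sphere 0 1" using False by (simp add: y_def)
    then have "x0 \<bullet> N x0 \<le> y \<bullet> N y" by (rule min)
    also have "y \<bullet> N y = (x \<bullet> N x) / (norm x)^2"
      by (simp add: y_def linear_scale[OF lin] power2_eq_square)
    finally show ?thesis using False by (simp add: field_simps dot_square_norm)
  qed (simp add: linear_0[OF lin])
  moreover have "x0 \<bullet> x0 = 1" using x0 by (simp add: dot_square_norm)
  ultimately show ?thesis using that by blast
qed

text \<open>A minimiser \<open>x\<^sub>0\<close> of the Rayleigh quotient is an eigenvector: otherwise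
  moving from \<open>x\<^sub>0\<close> in the direction \<open>N x\<^sub>0 - \<mu> x\<^sub>0\<close> would decrease the quotient to first order.\<close>
lemma self_adjoint_min_eigenvector:
  fixes N :: "'a::euclidean_space \<Rightarrow> 'a"
  assumes lin: "linear N" and sym: "\<And>x y. N x \<bullet> y = x \<bullet> N y"
  obtains x0 \<mu> where "x0 \<noteq> 0" "N x0 = \<mu> *\<^sub>R x0" "\<And>x. \<mu> * (x \<bullet> x) \<le> x \<bullet> N x"
proof -
  obtain x0 where nx0: "x0 \<bullet> x0 = 1" and ge: "\<And>x. (x0 \<bullet> N x0) * (x \<bullet> x) \<le> x \<bullet> N x"
    using linear_rayleigh_quotient_attains_min[OF lin] by blast
  define \<mu> where "\<mu> = x0 \<bullet> N x0"
  define y where "y = N x0 - \<mu> *\<^sub>R x0"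
  have "0 \<le> (y \<bullet> N y - \<mu> * (y \<bullet> y)) * t^2 + (2 * (y \<bullet> y)) * t" for t
  proof -
    have e1: "x0 \<bullet> N y = y \<bullet> N x0" by (metis sym inner_commute)
    have e2: "y \<bullet> y = y \<bullet> N x0 - \<mu> * (y \<bullet> x0)" by (simp add: y_def inner_diff_right)
    have "0 \<le> (x0 + t *\<^sub>R y) \<bullet> N (x0 + t *\<^sub>R y) - \<mu> * ((x0 + t *\<^sub>R y) \<bullet> (x0 + t *\<^sub>R y))"
      using ge[of "x0 + t *\<^sub>R y"] by (simp add: \<mu>_def)
    also have "\<dots> = (y \<bullet> N y - \<mu> * (y \<bullet> y)) * t^2 + (2 * (y \<bullet> y)) * t"
      by (simp add: linear_add[OF lin] linear_scale[OF lin] inner_add_left inner_add_right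
          power2_eq_square algebra_simps e1 e2 \<mu>_def nx0 inner_commute)
    finally show ?thesis .
  qed
  then have "2 * (y \<bullet> y) = 0" by (rule linear_coeff_eq_0_if_quadratic_nonneg)
  then have eigen: "N x0 = \<mu> *\<^sub>R x0" by (simp add: y_def)
  have "x0 \<noteq> 0" using nx0 by auto
  then show ?thesis using eigen ge unfolding \<mu>_def by (rule that)
qed

locale spd_operator =
  fixes M :: "'a::euclidean_space \<Rightarrow> 'a"
  assumes self_adjoint_pd: "self_adjoint_pd M"
begin

lemma linear_M: "linear M"
  using self_adjoint_pd by (simp add: self_adjoint_pd_def)

lemma inner_M_symmetric: "M x \<bullet> y = x \<bullet> M y"
  using self_adjoint_pd by (simp add: self_adjoint_pd_def)

lemma inner_M_commute: "x \<bullet> M y = y \<bullet> M x"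
  by (metis inner_M_symmetric inner_commute)

lemma inner_M_pos: "x \<noteq> 0 \<Longrightarrow> 0 < x \<bullet> M x"
  using self_adjoint_pd by (simp add: self_adjoint_pd_def)

lemmas M_linear_simps =
  linear_add[OF linear_M] linear_diff[OF linear_M] linear_scale[OF linear_M]
  linear_neg[OF linear_M] linear_0[OF linear_M]

lemma inner_M_nonneg: "0 \<le> x \<bullet> M x"
  using inner_M_pos[of x] by (cases "x = 0") auto

lemma bounded_linear_M: "bounded_linear M"
  using linear_M linear_conv_bounded_linear by blast

lemma continuous_on_M [continuous_intros]:
  "continuous_on S g \<Longrightarrow> continuous_on S (\<lambda>x. M (g x))"
  by (rule bounded_linear.continuous_on[OF bounded_linear_M])

lemma eigenvalues_op_rayleigh: "l \<in> eigenvalues_op M \<Longrightarrow> \<exists>x. x \<noteq> 0 \<and> l * (x \<bullet> x) = x \<bullet> M x"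
  unfolding eigenvalues_op_def by force

lemma lambda_min_pos: "0 < lambda_min M"
  and lambda_min_le_inner_M: "lambda_min M * (x \<bullet> x) \<le> x \<bullet> M x"
proof -
  obtain x0 \<mu> where x0: "x0 \<noteq> 0" "M x0 = \<mu> *\<^sub>R x0" and ge: "\<And>x. \<mu> * (x \<bullet> x) \<le> x \<bullet> M x"
    using self_adjoint_min_eigenvector[OF linear_M inner_M_symmetric] by blast
  have "\<mu> \<le> l" if l: "l \<in> eigenvalues_op M" for l
  proof -
    obtain x where x: "x \<noteq> 0" "l * (x \<bullet> x) = x \<bullet> M x"
      using eigenvalues_op_rayleigh[OF l] by blast
    have "\<mu> * (x \<bullet> x) \<le> l * (x \<bullet> x)" using ge[of x] x(2) by simp
    then show ?thesis by (rule mult_right_le_imp_le) (use x(1) in simp)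
  qed
  moreover have "\<mu> \<in> eigenvalues_op M" using x0 by (auto simp: eigenvalues_op_def)
  ultimately have \<mu>: "lambda_min M = \<mu>" unfolding lambda_min_def by (rule cInf_eq_minimum[rotated])
  have "0 < \<mu> * (x0 \<bullet> x0)" using inner_M_pos[OF x0(1)] x0(2) by simp
  moreover have "0 < x0 \<bullet> x0" using x0(1) by simp
  ultimately show "0 < lambda_min M" using \<mu> by (simp add: zero_less_mult_iff)
  show "lambda_min M * (x \<bullet> x) \<le> x \<bullet> M x" using ge \<mu> by simp
qed

lemma inner_M_le_lambda_max: "x \<bullet> M x \<le> lambda_max M * (x \<bullet> x)"
proof -
  obtain x0 \<mu> where x0: "x0 \<noteq> 0" "- M x0 = \<mu> *\<^sub>R x0" and ge: "\<And>x. \<mu> * (x \<bullet> x) \<le> x \<bullet> - M x"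
  proof (rule self_adjoint_min_eigenvector[of "\<lambda>x. - M x"])
    show "linear (\<lambda>x. - M x)" using linear_M by (rule linear_compose_neg)
  qed (simp_all add: inner_M_symmetric)
  have le: "x \<bullet> M x \<le> - \<mu> * (x \<bullet> x)" for x using ge[of x] by simp
  have "l \<le> - \<mu>" if l: "l \<in> eigenvalues_op M" for l
  proof -
    obtain x where x: "x \<noteq> 0" "l * (x \<bullet> x) = x \<bullet> M x"
      using eigenvalues_op_rayleigh[OF l] by blast
    have "l * (x \<bullet> x) \<le> - \<mu> * (x \<bullet> x)" using le[of x] x(2) by simp
    then show ?thesis by (rule mult_right_le_imp_le) (use x(1) in simp)
  qed
  moreover have "- \<mu> \<in> eigenvalues_op M"
    using x0 by (auto simp: eigenvalues_op_def intro!: exI[of _ x0] simp flip: x0(2))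
  ultimately have "lambda_max M = - \<mu>" unfolding lambda_max_def by (rule cSup_eq_maximum[rotated])
  then show ?thesis using le by simp
qed

lemma lambda_min_le_lambda_max: "lambda_min M \<le> lambda_max M"
proof -
  obtain x :: 'a where "x \<in> Basis" using SOME_Basis by blast
  then have "x \<noteq> 0" by (rule nonzero_Basis)
  then have "0 < x \<bullet> x" by simp
  moreover have "lambda_min M * (x \<bullet> x) \<le> lambda_max M * (x \<bullet> x)"
    using lambda_min_le_inner_M inner_M_le_lambda_max order.trans by blast
  ultimately show ?thesis by simp
qed

lemma normM_sq: "(normM M x)^2 = x \<bullet> M x"
  using inner_M_nonneg[of x] by (simp add: normM_def)

lemma normM_nonneg: "0 \<le> normM M x"
  using inner_M_nonneg by (simp add: normM_def)

lemma normM_minus_commute: "normM M (x - y) = normM M (y - x)"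
  by (metis M_linear_simps(4) inner_minus_left inner_minus_right minus_diff_eq minus_minus
      normM_def)

lemma normM_scaleR: "normM M (c *\<^sub>R x) = \<bar>c\<bar> * normM M x"
proof -
  have "(c *\<^sub>R x) \<bullet> M (c *\<^sub>R x) = c^2 * (x \<bullet> M x)"
    by (simp add: M_linear_simps power2_eq_square)
  then show ?thesis by (simp add: normM_def real_sqrt_mult)
qed

lemma normM_sq_add: "(normM M (x + y))^2 = (normM M x)^2 + 2 * (x \<bullet> M y) + (normM M y)^2"
  by (simp add: normM_sq M_linear_simps inner_add_left inner_add_right inner_M_commute[of y x])

lemma inner_M_Cauchy_Schwarz: "\<bar>x \<bullet> M y\<bar> \<le> normM M x * normM M y"
proof -
  have "(x \<bullet> M y)^2 \<le> (x \<bullet> M x) * (y \<bullet> M y)"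
  proof (cases "y = 0")
    case False
    define a b c where "a = y \<bullet> M y" and "b = x \<bullet> M y" and "c = x \<bullet> M x"
    have a: "0 < a" using inner_M_pos[OF False] a_def by simp
    have "0 \<le> (x - (b / a) *\<^sub>R y) \<bullet> M (x - (b / a) *\<^sub>R y)" by (rule inner_M_nonneg)
    also have "\<dots> = c - b^2 / a"
      using a by (simp add: M_linear_simps inner_diff_left inner_diff_right a_def b_def c_def
          inner_M_commute[of y x] power2_eq_square field_simps)
    finally show ?thesis using a by (simp add: a_def b_def c_def field_simps)
  qed (simp add: M_linear_simps)
  then have "\<bar>x \<bullet> M y\<bar>^2 \<le> (normM M x * normM M y)^2"
    by (simp add: power_mult_distrib normM_sq)
  then show ?thesis
    using normM_nonneg by (meson mult_nonneg_nonneg power2_le_imp_le)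
qed

lemma normM_triangle: "normM M (x + y) \<le> normM M x + normM M y"
proof -
  have "(normM M (x + y))^2 \<le> (normM M x + normM M y)^2"
    using inner_M_Cauchy_Schwarz[of x y] by (simp add: normM_sq_add power2_sum)
  then show ?thesis using normM_nonneg by (meson add_nonneg_nonneg power2_le_imp_le)
qed

lemma normM_triangle_diff: "normM M (x - z) \<le> normM M (x - y) + normM M (y - z)"
  using normM_triangle[of "x - y" "y - z"] by simp

lemma normM_sq_affine_combination:
  "(normM M ((1 - g) *\<^sub>R a + g *\<^sub>R b))^2 =
     (1 - g) * (normM M a)^2 + g * (normM M b)^2 - g * (1 - g) * (normM M (a - b))^2"
  unfolding normM_sq
  by (simp add: M_linear_simps inner_add_left inner_add_right inner_diff_left inner_diff_right
      inner_M_commute[of b a] algebra_simps power2_eq_square)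

lemma continuous_on_normM [continuous_intros]:
  "continuous_on S g \<Longrightarrow> continuous_on S (\<lambda>x. normM M (g x))"
  unfolding normM_def by (intro continuous_intros)

lemma sqrt_lambda_min_norm_le_normM: "sqrt (lambda_min M) * norm x \<le> normM M x"
proof -
  have "(sqrt (lambda_min M) * norm x)^2 = lambda_min M * (x \<bullet> x)"
    using lambda_min_pos by (simp add: power_mult_distrib dot_square_norm)
  also have "\<dots> \<le> (normM M x)^2" using lambda_min_le_inner_M normM_sq by simp
  finally show ?thesis using normM_nonneg by (meson power2_le_imp_le)
qed

lemma lambda_min_norm_le_normM:
  assumes "lambda_max M = 1"
  shows "lambda_min M * norm x \<le> normM M x"
proof -
  have "lambda_min M \<le> 1" using lambda_min_le_lambda_max assms by simp
  then have "lambda_min M \<le> sqrt (lambda_min M)"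
    using lambda_min_pos by (simp add: real_le_rsqrt power2_eq_square mult_le_cancel_left1)
  then have "lambda_min M * norm x \<le> sqrt (lambda_min M) * norm x" by (simp add: mult_right_mono)
  also have "\<dots> \<le> normM M x" by (rule sqrt_lambda_min_norm_le_normM)
  finally show ?thesis .
qed

lemma normM_le_norm:
  assumes "lambda_max M = 1"
  shows "normM M x \<le> norm x"
  using inner_M_le_lambda_max[of x] assms by (simp add: normM_def norm_eq_sqrt_inner)

lemma norm_M_le_normM:
  assumes "lambda_max M = 1"
  shows "norm (M x) \<le> normM M x"
proof -
  have "(norm (M x))^2 = x \<bullet> M (M x)" by (simp only: power2_norm_eq_inner inner_M_symmetric)
  also have "\<dots> \<le> normM M x * normM M (M x)" using inner_M_Cauchy_Schwarz[of x "M x"] by linarith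
  also have "\<dots> \<le> normM M x * norm (M x)"
    by (rule mult_left_mono[OF normM_le_norm[OF assms] normM_nonneg])
  finally have "norm (M x) * norm (M x) \<le> normM M x * norm (M x)" by (simp add: power2_eq_square)
  then show ?thesis using normM_nonneg[of x] by (cases "M x = 0") simp_all
qed

lemma distM_le: "d \<in> S \<Longrightarrow> distM M z S \<le> normM M (d - z)"
  unfolding distM_def by (rule cInf_lower) (auto intro: bdd_belowI[of _ 0] simp: normM_nonneg)

lemma distM_attained:
  assumes "closed S" and "S \<noteq> {}"
  obtains s where "s \<in> S" "normM M (s - z) = distM M z S"
proof -
  obtain d0 where d0: "d0 \<in> S" using assms(2) by blast
  define c where "c = sqrt (lambda_min M)"
  have c0: "c > 0" using lambda_min_pos by (simp add: c_def)
  have normM_ge: "c * norm (s - z) \<le> normM M (s - z)" for s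
    unfolding c_def by (rule sqrt_lambda_min_norm_le_normM)
  define K where "K = S \<inter> cball z (normM M (d0 - z) / c)"
  have "compact K" unfolding K_def using assms(1) by (intro closed_Int_compact) auto
  moreover have d0K: "d0 \<in> K"
    using d0 normM_ge[of d0] c0 by (simp add: K_def dist_norm norm_minus_commute field_simps)
  ultimately obtain s1 where s1: "s1 \<in> K" and min: "\<And>s. s \<in> K \<Longrightarrow> normM M (s1 - z) \<le> normM M (s - z)"
    using continuous_attains_inf[of K "\<lambda>s. normM M (s - z)"] by (force intro: continuous_intros)
  have "normM M (s1 - z) \<le> normM M (s - z)" if s: "s \<in> S" for s
  proof (cases "s \<in> K")
    case False
    then have "normM M (d0 - z) < c * norm (s - z)"
      using s c0 by (simp add: K_def dist_norm norm_minus_commute field_simps)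
    then show ?thesis using min[OF d0K] normM_ge[of s] by linarith
  qed (rule min)
  then have "distM M z S = normM M (s1 - z)"
    unfolding distM_def using s1 by (intro cInf_eq_minimum) (auto simp: K_def)
  then show ?thesis using s1 by (auto simp: K_def intro: that)
qed

lemma distM_nonneg:
  assumes "closed S" and "S \<noteq> {}"
  shows "0 \<le> distM M z S"
proof -
  obtain s where "normM M (s - z) = distM M z S" using distM_attained[OF assms] by blast
  then show ?thesis using normM_nonneg by metis
qed

lemma distM_le_distM_add:
  assumes "closed S" and "S \<noteq> {}"
  shows "distM M x S \<le> distM M y S + normM M (x - y)"
proof -
  obtain s where "s \<in> S" "normM M (s - y) = distM M y S" using distM_attained[OF assms] .
  then show ?thesis
    using distM_le[of s S x] normM_triangle_diff[of s x y] normM_minus_commute[of x y] by linarith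
qed

end

lemma maximal_monotone_graph_nonempty:
  assumes "maximal_monotone T"
  obtains y v where "v \<in> T y"
  using assms unfolding maximal_monotone_def by blast

lemma zeros_eq_Inter_halfspaces:
  assumes "maximal_monotone T"
  shows "zeros T = (\<Inter>(y, v)\<in>{(y, v). v \<in> T y}. {x. v \<bullet> x \<le> v \<bullet> y})"
proof -
  have "zeros T = {x. \<forall>y v. v \<in> T y \<longrightarrow> 0 \<le> (x - y) \<bullet> (0 - v)}"
    using assms unfolding maximal_monotone_def monotone_operator_def zeros_def by blast
  also have "\<dots> = (\<Inter>(y, v)\<in>{(y, v). v \<in> T y}. {x. v \<bullet> x \<le> v \<bullet> y})"
    by (auto simp: inner_diff_left inner_diff_right inner_commute)
  finally show ?thesis .
qed

lemma closed_zeros: "maximal_monotone T \<Longrightarrow> closed (zeros T)"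
  by (auto simp: zeros_eq_Inter_halfspaces intro!: closed_INT closed_halfspace_le)

lemma convex_zeros: "maximal_monotone T \<Longrightarrow> convex (zeros T)"
  by (auto simp: zeros_eq_Inter_halfspaces intro!: convex_INT convex_halfspace_le)

lemma weighted_sum_symmetrization:
  fixes x v :: "'i \<Rightarrow> 'a::real_inner"
  assumes p: "(\<Sum>i\<in>I. m i) *\<^sub>R p = (\<Sum>i\<in>I. m i *\<^sub>R x i)"
  shows "2 * (\<Sum>i\<in>I. m i) * (\<Sum>i\<in>I. m i * ((p - x i) \<bullet> v i))
    = - (\<Sum>i\<in>I. \<Sum>j\<in>I. m i * m j * ((x i - x j) \<bullet> (v i - v j)))"
proof -
  define S where "S = (\<Sum>i\<in>I. m i)"
  define A where "A = (\<Sum>i\<in>I. \<Sum>j\<in>I. m i * m j * ((x j - x i) \<bullet> v i))"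
  have Si: "S * ((p - x i) \<bullet> v i) = (\<Sum>j\<in>I. m j * ((x j - x i) \<bullet> v i))" for i
  proof -
    have "S *\<^sub>R p - S *\<^sub>R x i = (\<Sum>j\<in>I. m j *\<^sub>R (x j - x i))"
      using p by (simp add: S_def scaleR_sum_left scaleR_diff_right sum_subtractf)
    then have "(S *\<^sub>R p - S *\<^sub>R x i) \<bullet> v i = (\<Sum>j\<in>I. m j * ((x j - x i) \<bullet> v i))"
      by (simp add: inner_sum_left)
    then show ?thesis by (simp add: inner_diff_left algebra_simps)
  qed
  have "S * (\<Sum>i\<in>I. m i * ((p - x i) \<bullet> v i)) = (\<Sum>i\<in>I. m i * (S * ((p - x i) \<bullet> v i)))"
    by (simp add: sum_distrib_left mult.left_commute)
  also have "\<dots> = A" by (simp only: Si A_def sum_distrib_left mult.assoc)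
  finally have S_sum: "S * (\<Sum>i\<in>I. m i * ((p - x i) \<bullet> v i)) = A" .
  have A_swap: "A = (\<Sum>i\<in>I. \<Sum>j\<in>I. m i * m j * ((x i - x j) \<bullet> v j))"
    unfolding A_def by (subst sum.swap) (intro sum.cong refl, simp only: mult.commute)
  have "2 * A = (\<Sum>i\<in>I. \<Sum>j\<in>I.
      m i * m j * ((x j - x i) \<bullet> v i) + m i * m j * ((x i - x j) \<bullet> v j))"
    unfolding mult_2 by (subst (2) A_swap) (simp only: A_def sum.distrib[symmetric])
  also have "\<dots> = - (\<Sum>i\<in>I. \<Sum>j\<in>I. m i * m j * ((x i - x j) \<bullet> (v i - v j)))"
    by (simp add: sum_negf[symmetric] algebra_simps inner_diff_left inner_diff_right)
  finally show ?thesis using S_sum by (simp add: S_def mult.assoc)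
qed

lemma monotone_weighted_sum_nonpos:
  fixes x v :: "'i \<Rightarrow> 'a::real_inner"
  assumes fin: "finite I"
    and mono: "\<And>i j. i \<in> I \<Longrightarrow> j \<in> I \<Longrightarrow> 0 \<le> (x i - x j) \<bullet> (v i - v j)"
    and m0: "\<And>i. i \<in> I \<Longrightarrow> 0 \<le> m i"
    and p: "(\<Sum>i\<in>I. m i) *\<^sub>R p = (\<Sum>i\<in>I. m i *\<^sub>R x i)"
  shows "(\<Sum>i\<in>I. m i * ((p - x i) \<bullet> v i)) \<le> 0"
proof (cases "(\<Sum>i\<in>I. m i) = 0")
  case True
  then have "\<forall>i\<in>I. m i = 0" using sum_nonneg_eq_0_iff[OF fin] m0 by blast
  then show ?thesis by simp
next
  case False
  then have pos: "0 < 2 * (\<Sum>i\<in>I. m i)" using m0 by (simp add: sum_nonneg order_less_le)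
  have "0 \<le> (\<Sum>i\<in>I. \<Sum>j\<in>I. m i * m j * ((x i - x j) \<bullet> (v i - v j)))"
    by (intro sum_nonneg) (simp add: m0 mono)
  then have "2 * (\<Sum>i\<in>I. m i) * (\<Sum>i\<in>I. m i * ((p - x i) \<bullet> v i)) \<le> 2 * (\<Sum>i\<in>I. m i) * 0"
    using weighted_sum_symmetrization[OF p, of v] by simp
  then show ?thesis using pos by (simp only: mult_le_cancel_left_pos)
qed

lemma convex_weighted_average_mem:
  fixes x :: "'i \<Rightarrow> 'a::real_vector"
  assumes K: "convex K" and fin: "finite I" and p: "p \<in> K" and x: "\<And>i. i \<in> I \<Longrightarrow> x i \<in> K"
    and w: "\<And>i. i \<in> I \<Longrightarrow> 0 \<le> w i"
  shows "(1 / (1 + (\<Sum>i\<in>I. w i))) *\<^sub>R (p + (\<Sum>i\<in>I. w i *\<^sub>R x i)) \<in> K"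
proof (cases "(\<Sum>i\<in>I. w i) = 0")
  case True
  then have "\<forall>i\<in>I. w i = 0" using sum_nonneg_eq_0_iff[OF fin] w by blast
  then show ?thesis using p by simp
next
  case False
  define S where "S = (\<Sum>i\<in>I. w i)"
  have S: "0 < S" using False w by (simp add: S_def sum_nonneg order_less_le)
  define q where "q = (\<Sum>i\<in>I. (w i / S) *\<^sub>R x i)"
  have "q \<in> K" unfolding q_def
  proof (rule convex_sum[OF fin K])
    show "(\<Sum>i\<in>I. w i / S) = 1" using S by (simp add: S_def sum_divide_distrib[symmetric])
  qed (use w S x in auto)
  moreover have "(1 / (1 + S)) *\<^sub>R (p + (\<Sum>i\<in>I. w i *\<^sub>R x i))
      = (1 / (1 + S)) *\<^sub>R p + (S / (1 + S)) *\<^sub>R q"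
    using S by (simp add: q_def scaleR_add_right scaleR_sum_right)
  moreover have "1 / (1 + S) + S / (1 + S) = 1"
    using S by (simp add: add_divide_distrib[symmetric])
  ultimately show ?thesis using convexD[OF K p] S unfolding S_def by simp
qed

text \<open>Brouwer's theorem applied to \<open>p \<mapsto> (p + \<Sum>\<^sub>i m\<^sub>i(p) x\<^sub>i) / (1 + \<Sum>\<^sub>i m\<^sub>i(p))\<close>
  on the convex hull of the \<open>x\<^sub>i\<close>.\<close>
lemma weighted_barycenter_fixpoint:
  fixes x :: "'i \<Rightarrow> 'a::euclidean_space" and m :: "'i \<Rightarrow> 'a \<Rightarrow> real"
  assumes fin: "finite I" and ne: "I \<noteq> {}"
    and cont: "\<And>i. i \<in> I \<Longrightarrow> continuous_on UNIV (m i)" and m0: "\<And>i p. 0 \<le> m i p"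
  obtains p where "(\<Sum>i\<in>I. m i p) *\<^sub>R p = (\<Sum>i\<in>I. m i p *\<^sub>R x i)"
proof -
  define S where "S p = (\<Sum>i\<in>I. m i p)" for p
  define f where "f p = (1 / (1 + S p)) *\<^sub>R (p + (\<Sum>i\<in>I. m i p *\<^sub>R x i))" for p
  define K where "K = convex hull (x ` I)"
  have S0: "0 \<le> S p" for p by (simp add: S_def sum_nonneg m0)
  have K: "compact K" "convex K" "K \<noteq> {}"
    using ne by (auto simp: K_def intro: compact_convex_hull finite_imp_compact fin)
  have "continuous_on K f"
    unfolding f_def S_def using S0
    by (intro continuous_intros continuous_on_subset[OF cont])
      (auto simp: S_def add_nonneg_eq_0_iff)
  moreover have "f p \<in> K" if "p \<in> K" for p
    unfolding f_def S_def
    by (rule convex_weighted_average_mem[OF K(2) fin that]) (simp_all add: K_def hull_inc m0)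
  ultimately obtain p where "f p = p"
    using brouwer[OF K] by blast
  moreover have "(1 + S p) *\<^sub>R f p = p + (\<Sum>i\<in>I. m i p *\<^sub>R x i)"
    using S0[of p] by (simp add: f_def)
  ultimately have "(1 + S p) *\<^sub>R p = p + (\<Sum>i\<in>I. m i p *\<^sub>R x i)" by simp
  then show ?thesis using that by (simp add: S_def scaleR_add_left)
qed

lemma monotone_variational_inequality_finite:
  fixes c :: "'a::euclidean_space \<Rightarrow> 'a"
  assumes fin: "finite I" and ne: "I \<noteq> {}" and cont: "continuous_on UNIV c"
    and mono: "\<And>i j. i \<in> I \<Longrightarrow> j \<in> I \<Longrightarrow> 0 \<le> (x i - x j) \<bullet> (v i - v j)"
  obtains p where "\<And>i. i \<in> I \<Longrightarrow> 0 \<le> (p - x i) \<bullet> (c p - v i)"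
proof -
  define g where "g i p = (p - x i) \<bullet> (c p - v i)" for i p
  define m where "m i p = max 0 (- g i p)" for i p
  have m0: "0 \<le> m i p" for i p by (simp add: m_def)
  have m_cont: "continuous_on UNIV (m i)" for i
    unfolding m_def g_def by (intro continuous_intros cont)
  obtain p where p: "(\<Sum>i\<in>I. m i p) *\<^sub>R p = (\<Sum>i\<in>I. m i p *\<^sub>R x i)"
    by (rule weighted_barycenter_fixpoint[OF fin ne m_cont m0])
  have "(\<Sum>i\<in>I. m i p * ((p - x i) \<bullet> c p)) = (\<Sum>i\<in>I. m i p *\<^sub>R (p - x i)) \<bullet> c p"
    by (simp add: inner_sum_left)
  also have "(\<Sum>i\<in>I. m i p *\<^sub>R (p - x i)) = 0"
    using p by (simp add: scaleR_diff_right sum_subtractf scaleR_sum_left)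
  finally have "(\<Sum>i\<in>I. m i p * g i p) = - (\<Sum>i\<in>I. m i p * ((p - x i) \<bullet> v i))"
    by (simp add: g_def inner_diff_right right_diff_distrib sum_subtractf)
  also have "\<dots> \<ge> 0"
    using monotone_weighted_sum_nonpos[OF fin mono m0 p] by simp
  finally have sum_nonneg: "0 \<le> (\<Sum>i\<in>I. m i p * g i p)" .
  have g_nonneg: "0 \<le> g i p" if i: "i \<in> I" for i
  proof (rule ccontr)
    assume "\<not> 0 \<le> g i p"
    then have "0 < (\<Sum>i\<in>I. - (m i p * g i p))"
      by (intro sum_pos2[OF fin i]) (auto simp: m_def mult_le_0_iff zero_less_mult_iff)
    then show False using sum_nonneg by (simp add: sum_negf)
  qed
  then show ?thesis unfolding g_def by (rule that)
qed

context spd_operator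
begin

lemma bounded_variational_constraint: "bounded {p. 0 \<le> (p - y) \<bullet> (M (z - p) - c)}"
proof -
  define b where "b = M (z - y) - c"
  have "{p. 0 \<le> (p - y) \<bullet> (M (z - p) - c)} \<subseteq> cball y (norm b / lambda_min M)"
  proof
    fix p assume "p \<in> {p. 0 \<le> (p - y) \<bullet> (M (z - p) - c)}"
    then have "(p - y) \<bullet> M (p - y) \<le> (p - y) \<bullet> b"
      by (simp add: b_def M_linear_simps inner_diff_right algebra_simps)
    also have "\<dots> \<le> norm (p - y) * norm b" by (rule norm_cauchy_schwarz)
    finally have "lambda_min M * norm (p - y) * norm (p - y) \<le> norm b * norm (p - y)"
      using lambda_min_le_inner_M[of "p - y"]
      by (simp add: dot_square_norm power2_eq_square mult_ac)
    then have "lambda_min M * norm (p - y) \<le> norm b"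
      by (cases "p = y") (auto intro: mult_right_le_imp_le)
    then show "p \<in> cball y (norm b / lambda_min M)"
      using lambda_min_pos by (simp add: dist_norm norm_minus_commute field_simps)
  qed
  then show ?thesis using bounded_subset by blast
qed

text \<open>Minty's theorem for \<open>M\<^sup>-\<^sup>1T\<close>, by compactness: the constraint sets are closed,
  finitely many of them intersect by the finite-dimensional case, and the one attached to a
  fixed graph point is bounded.\<close>
lemma minty_variational_solution:
  assumes mm: "maximal_monotone T" and \<sigma>: "0 < \<sigma>"
  obtains p where "\<And>y v. v \<in> T y \<Longrightarrow> 0 \<le> (p - y) \<bullet> (M (z - p) - \<sigma> *\<^sub>R v)"
proof -
  have mono: "monotone_operator T" using mm by (simp add: maximal_monotone_def)
  obtain y0 v0 where y0: "v0 \<in> T y0" using maximal_monotone_graph_nonempty[OF mm] .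
  define C where "C i = {p. 0 \<le> (p - fst i) \<bullet> (M (z - p) - \<sigma> *\<^sub>R snd i)}" for i
  define G where "G = {i. snd i \<in> T (fst i)}"
  have "bounded (C (y0, v0))" unfolding C_def by (rule bounded_variational_constraint)
  moreover have "closed (C i)" for i
    unfolding C_def by (intro closed_Collect_le continuous_intros)
  moreover have "\<Inter> F \<noteq> {}" if F: "finite F" "F \<subseteq> C ` G" for F
  proof -
    obtain H where H: "H \<subseteq> G" "finite H" "F = C ` H"
      using finite_subset_image[OF F] by blast
    let ?I = "insert (y0, v0) H"
    have mono_I: "0 \<le> (fst i - fst j) \<bullet> (\<sigma> *\<^sub>R snd i - \<sigma> *\<^sub>R snd j)"
      if "i \<in> ?I" "j \<in> ?I" for i j
    proof -
      have "snd i \<in> T (fst i)" "snd j \<in> T (fst j)" using that H(1) y0 by (auto simp: G_def)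
      then have "0 \<le> (fst i - fst j) \<bullet> (snd i - snd j)"
        using mono unfolding monotone_operator_def by blast
      then show ?thesis using \<sigma> by (simp add: zero_le_mult_iff flip: scaleR_diff_right)
    qed
    have "continuous_on UNIV (\<lambda>p. M (z - p))" by (intro continuous_intros)
    then obtain p where "\<And>i. i \<in> ?I \<Longrightarrow> 0 \<le> (p - fst i) \<bullet> (M (z - p) - \<sigma> *\<^sub>R snd i)"
      using monotone_variational_inequality_finite[where x = fst and v = "\<lambda>i. \<sigma> *\<^sub>R snd i"]
        H(2) mono_I by blast
    then have "p \<in> \<Inter> F" using H(3) by (auto simp: C_def)
    then show ?thesis by blast
  qed
  moreover have "C (y0, v0) \<in> C ` G" using y0 by (simp add: G_def)
  ultimately obtain p where "p \<in> \<Inter> (C ` G)"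
    using closed_fip_Heine_Borel[of "C (y0, v0)" "C ` G"] by blast
  then show ?thesis using that by (auto simp: C_def G_def)
qed

lemma resolvent_point_unique:
  assumes mono: "monotone_operator T" and \<sigma>: "0 < \<sigma>"
    and graph: "M w1 \<in> T p1" "M w2 \<in> T p2" and eq: "p1 + \<sigma> *\<^sub>R w1 = p2 + \<sigma> *\<^sub>R w2"
  shows "p1 = p2"
proof -
  have w: "\<sigma> *\<^sub>R (w1 - w2) = - (p1 - p2)" using eq by (simp add: algebra_simps)
  have "w1 - w2 = (1 / \<sigma>) *\<^sub>R (\<sigma> *\<^sub>R (w1 - w2))" using \<sigma> by simp
  also have "\<dots> = - (1 / \<sigma>) *\<^sub>R (p1 - p2)" by (simp only: w scaleR_minus_left scaleR_minus_right)
  finally have "M w1 - M w2 = - (1 / \<sigma>) *\<^sub>R M (p1 - p2)"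
    by (simp only: M_linear_simps(2)[symmetric] M_linear_simps(3))
  moreover have "0 \<le> (p1 - p2) \<bullet> (M w1 - M w2)"
    using mono graph unfolding monotone_operator_def by blast
  ultimately have "(p1 - p2) \<bullet> M (p1 - p2) \<le> 0"
    using \<sigma> by (simp add: divide_le_0_iff)
  then show ?thesis using inner_M_pos[of "p1 - p2"] by force
qed

lemma resolventM_in_graph:
  assumes mm: "maximal_monotone T" and \<sigma>: "0 < \<sigma>"
  shows "M ((1 / \<sigma>) *\<^sub>R (z - resolventM T M \<sigma> z)) \<in> T (resolventM T M \<sigma> z)"
proof -
  have mono: "monotone_operator T" using mm by (simp add: maximal_monotone_def)
  obtain p where p: "\<And>y v. v \<in> T y \<Longrightarrow> 0 \<le> (p - y) \<bullet> (M (z - p) - \<sigma> *\<^sub>R v)"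
    using minty_variational_solution[OF mm \<sigma>] by blast
  define w where "w = (1 / \<sigma>) *\<^sub>R (z - p)"
  have z: "z = p + \<sigma> *\<^sub>R w" using \<sigma> by (simp add: w_def)
  then have "M (z - p) - \<sigma> *\<^sub>R v = \<sigma> *\<^sub>R (M w - v)" for v
    by (simp add: M_linear_simps scaleR_diff_right)
  then have "0 \<le> (p - y) \<bullet> (M w - v)" if "v \<in> T y" for y v
    using p[OF that] \<sigma> by (simp add: zero_le_mult_iff)
  then have w: "M w \<in> T p" using mm unfolding maximal_monotone_def by blast
  have "resolventM T M \<sigma> z = p"
    unfolding resolventM_def
  proof (rule the_equality)
    show "\<exists>w. M w \<in> T p \<and> z = p + \<sigma> *\<^sub>R w" using w z by blast
    show "q = p" if q: "\<exists>w. M w \<in> T q \<and> z = q + \<sigma> *\<^sub>R w" for q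
    proof -
      obtain w' where w': "M w' \<in> T q" "q + \<sigma> *\<^sub>R w' = p + \<sigma> *\<^sub>R w" using q z by auto
      show ?thesis by (rule resolvent_point_unique[OF mono \<sigma> w'(1) w w'(2)])
    qed
  qed
  then show ?thesis using w by (simp add: w_def)
qed

lemma resolventM_firmly_quasi_nonexpansive:
  fixes z zs :: 'a
  assumes mm: "maximal_monotone T" and \<sigma>: "0 < \<sigma>" and zs: "zs \<in> zeros T"
  defines "p \<equiv> resolventM T M \<sigma> z"
  shows "(normM M (p - zs))^2 + (normM M (z - p))^2 \<le> (normM M (z - zs))^2"
proof -
  have "0 \<le> (p - zs) \<bullet> (M ((1 / \<sigma>) *\<^sub>R (z - p)) - 0)"
    using mm resolventM_in_graph[OF mm \<sigma>] zs
    unfolding maximal_monotone_def monotone_operator_def zeros_def p_def by blast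
  then have "0 \<le> (p - zs) \<bullet> M (z - p)"
    using \<sigma> by (simp add: M_linear_simps(3) zero_le_divide_iff)
  then have "0 \<le> (z - p) \<bullet> M (p - zs)" by (simp only: inner_M_commute[of "z - p"])
  moreover have "(normM M (z - zs))^2 = (normM M ((z - p) + (p - zs)))^2" by simp
  ultimately show ?thesis unfolding normM_sq_add by linarith
qed

lemma normM_resolventM_le:
  assumes "maximal_monotone T" and "0 < \<sigma>" and "zs \<in> zeros T"
  shows "normM M (resolventM T M \<sigma> z - zs) \<le> normM M (z - zs)"
  using resolventM_firmly_quasi_nonexpansive[OF assms, of z] normM_nonneg
  by (smt (verit) power2_le_imp_le zero_le_power2)

lemma resolventM_residual_le_distM:
  assumes mm: "maximal_monotone T" and ne: "zeros T \<noteq> {}" and \<sigma>: "0 < \<sigma>"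
  shows "normM M (z - resolventM T M \<sigma> z) \<le> distM M z (zeros T)"
proof -
  obtain zb where zb: "zb \<in> zeros T" "normM M (zb - z) = distM M z (zeros T)"
    using distM_attained[OF closed_zeros[OF mm] ne] .
  then have "(normM M (z - resolventM T M \<sigma> z))^2 \<le> (distM M z (zeros T))^2"
    using resolventM_firmly_quasi_nonexpansive[OF mm \<sigma> zb(1), of z] normM_minus_commute[of z zb]
    by (smt (verit) zero_le_power2)
  then show ?thesis using zb(2) normM_nonneg by (metis power2_le_imp_le)
qed

end

definition relaxed_ppa_rate :: "real \<Rightarrow> real \<Rightarrow> real" where
  "relaxed_ppa_rate \<gamma> \<alpha> = sqrt (1 - min \<gamma> (2 * \<gamma> - \<gamma>^2) * \<alpha>^2 / (\<alpha>^2 + 1))"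

definition igppa_rate :: "real \<Rightarrow> real \<Rightarrow> real \<Rightarrow> real" where
  "igppa_rate \<gamma> \<delta> \<alpha> =
     (1 / (1 - \<delta>)) * (relaxed_ppa_rate \<gamma> \<alpha> + \<delta> * (min \<gamma> 1 / sqrt (\<alpha>^2 + 1) + 1))"

lemma relaxed_ppa_rate_radicand_nonneg:
  fixes \<gamma> \<alpha> :: real
  shows "0 \<le> 1 - min \<gamma> (2 * \<gamma> - \<gamma>^2) * \<alpha>^2 / (\<alpha>^2 + 1)"
proof -
  have "2 * \<gamma> - \<gamma>^2 = 1 - (\<gamma> - 1)^2" by (simp add: power2_eq_square algebra_simps)
  then have "min \<gamma> (2 * \<gamma> - \<gamma>^2) \<le> 1" by (simp add: min_le_iff_disj)
  moreover have "0 \<le> \<alpha>^2 / (\<alpha>^2 + 1)" "\<alpha>^2 / (\<alpha>^2 + 1) \<le> 1"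
    using add_nonneg_pos[of "\<alpha>^2" 1] by (simp_all add: divide_le_eq_1)
  ultimately have "min \<gamma> (2 * \<gamma> - \<gamma>^2) * (\<alpha>^2 / (\<alpha>^2 + 1)) \<le> 1"
    by (metis mult_le_one mult_nonpos_nonneg nle_le order_trans zero_le_one)
  then show ?thesis by simp
qed

lemma relaxed_ppa_rate_nonneg: "0 \<le> relaxed_ppa_rate \<gamma> \<alpha>"
  using relaxed_ppa_rate_radicand_nonneg by (simp add: relaxed_ppa_rate_def)

lemma igppa_rate_nonneg:
  assumes "0 < \<gamma>" "0 \<le> \<delta>" "\<delta> < 1"
  shows "0 \<le> igppa_rate \<gamma> \<delta> \<alpha>"
  using assms relaxed_ppa_rate_nonneg[of \<gamma> \<alpha>] by (simp add: igppa_rate_def)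

text \<open>The point is that \<open>\<gamma> \<le> relaxed_ppa_rate \<gamma> \<alpha> + 1\<close>: for \<open>\<gamma> > 1\<close> the radicand is at
  least \<open>(\<gamma>-1)\<^sup>2\<close>.\<close>
lemma relaxed_ppa_rate_add_error_le_igppa_rate:
  assumes \<gamma>: "0 < \<gamma>" "\<gamma> < 2" and \<delta>: "0 \<le> \<delta>" "\<delta> < 1"
  shows "relaxed_ppa_rate \<gamma> \<alpha> + \<gamma> * \<delta> / (1 - \<delta>) \<le> igppa_rate \<gamma> \<delta> \<alpha>"
proof -
  define R where "R = relaxed_ppa_rate \<gamma> \<alpha>"
  define c where "c = min \<gamma> 1 / sqrt (\<alpha>^2 + 1)"
  have R0: "0 \<le> R" and c0: "0 \<le> c" using \<gamma> relaxed_ppa_rate_nonneg by (simp_all add: R_def c_def)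
  have "\<gamma> \<le> R + 1"
  proof (cases "\<gamma> \<le> 1")
    case False
    then have "min \<gamma> (2 * \<gamma> - \<gamma>^2) = 2 * \<gamma> - \<gamma>^2" by (simp add: min_def power2_eq_square)
    then have "R^2 - (\<gamma> - 1)^2 = \<gamma> * (2 - \<gamma>) * (1 - \<alpha>^2 / (\<alpha>^2 + 1))"
      using relaxed_ppa_rate_radicand_nonneg[of \<gamma> \<alpha>]
      by (simp add: R_def relaxed_ppa_rate_def field_simps power2_eq_square)
    also have "\<dots> \<ge> 0"
      using \<gamma> add_nonneg_pos[of "\<alpha>^2" 1] by (intro mult_nonneg_nonneg) (simp_all add: divide_le_eq_1)
    finally have "(\<gamma> - 1)^2 \<le> R^2" by simp
    then have "\<gamma> - 1 \<le> R" using R0 by (rule power2_le_imp_le)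
    then show ?thesis by simp
  qed (use R0 in simp)
  then have "\<gamma> * \<delta> \<le> (R + 1) * \<delta>" using \<delta> by (intro mult_right_mono) simp_all
  moreover have "0 \<le> \<delta> * c" using \<delta> c0 by simp
  ultimately have "(1 - \<delta>) * R + \<gamma> * \<delta> \<le> R + \<delta> * (c + 1)"
    by (simp add: algebra_simps)
  moreover have "R + \<gamma> * \<delta> / (1 - \<delta>) = ((1 - \<delta>) * R + \<gamma> * \<delta>) / (1 - \<delta>)"
    using \<delta> by (simp add: field_simps)
  ultimately have "R + \<gamma> * \<delta> / (1 - \<delta>) \<le> (R + \<delta> * (c + 1)) / (1 - \<delta>)"
    using \<delta> by (simp add: divide_right_mono)
  then show ?thesis by (simp add: igppa_rate_def R_def c_def)
qed

lemma underrelaxed_rate_bound: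
  fixes \<gamma> \<alpha> d e q :: real
  assumes \<gamma>: "0 \<le> \<gamma>" "\<gamma> \<le> 1" and fqne: "q^2 \<le> d^2 - e^2" and subreg: "\<alpha>^2 * q^2 \<le> e^2"
  shows "(1 - \<gamma>) * d^2 + \<gamma> * q^2 \<le> (1 - \<gamma> * \<alpha>^2 / (\<alpha>^2 + 1)) * d^2"
proof -
  have "(\<alpha>^2 + 1) * q^2 \<le> d^2" using fqne subreg by (simp add: algebra_simps)
  then have "q^2 \<le> d^2 / (\<alpha>^2 + 1)" by (simp add: field_simps add_pos_nonneg)
  then have "(1 - \<gamma>) * d^2 + \<gamma> * q^2 \<le> (1 - \<gamma>) * d^2 + \<gamma> * (d^2 / (\<alpha>^2 + 1))"
    using \<gamma> by (intro add_left_mono mult_left_mono) simp_all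
  also have "\<dots> = (1 - \<gamma> * \<alpha>^2 / (\<alpha>^2 + 1)) * d^2"
  proof -
    have "1 + \<alpha>^2 > 0" by (rule add_pos_nonneg) simp_all
    then show ?thesis by (simp add: field_simps)
  qed
  finally show ?thesis .
qed

text \<open>Split according to whether the residual \<open>e\<close> or the distance \<open>q\<close> of the resolvent
  dominates, with threshold \<open>e\<^sup>2 = d\<^sup>2\<alpha>\<^sup>2/(1+\<alpha>\<^sup>2)\<close>.\<close>
lemma overrelaxed_rate_bound:
  fixes \<gamma> \<alpha> d e q :: real
  assumes \<gamma>: "1 \<le> \<gamma>" "\<gamma> < 2" and \<alpha>: "0 < \<alpha>"
    and fqne: "q^2 \<le> d^2 - e^2" and subreg: "\<alpha>^2 * q^2 \<le> e^2"
  shows "(1 - \<gamma>) * d^2 + \<gamma> * (q^2 + (\<gamma> - 1) * e^2) \<le> (1 - (2 * \<gamma> - \<gamma>^2) * \<alpha>^2 / (\<alpha>^2 + 1)) * d^2"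
proof -
  define s where "s = \<alpha>^2 / (\<alpha>^2 + 1)"
  have a2: "0 < \<alpha>^2" using \<alpha> by simp
  have "q^2 + (\<gamma> - 1) * e^2 \<le> (1 - (2 - \<gamma>) * s) * d^2"
  proof (cases "s * d^2 \<le> e^2")
    case True
    have "q^2 + (\<gamma> - 1) * e^2 \<le> d^2 - (2 - \<gamma>) * e^2" using fqne by (simp add: algebra_simps)
    also have "\<dots> \<le> d^2 - (2 - \<gamma>) * (s * d^2)" using True \<gamma> by (simp add: mult_left_mono)
    finally show ?thesis by (simp add: algebra_simps)
  next
    case False
    have "q^2 + (\<gamma> - 1) * e^2 \<le> e^2 * (1 / \<alpha>^2 + (\<gamma> - 1))"
      using subreg a2 by (simp add: field_simps)
    also have "\<dots> \<le> (s * d^2) * (1 / \<alpha>^2 + (\<gamma> - 1))"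
      using False \<gamma> a2 by (intro mult_right_mono) (simp_all add: add_pos_nonneg)
    also have "\<dots> = (1 - (2 - \<gamma>) * s) * d^2"
    proof -
      have "0 < \<alpha>^2 + 1" "0 < 1 + \<alpha>^2" using a2 by linarith+
      then have "s * (1 / \<alpha>^2) = 1 / (\<alpha>^2 + 1)" "1 - s = 1 / (\<alpha>^2 + 1)"
        using \<alpha> by (simp_all add: s_def field_simps)
      then have "s * (1 / \<alpha>^2 + (\<gamma> - 1)) = 1 - (2 - \<gamma>) * s" by (simp add: algebra_simps)
      moreover have "(s * d^2) * (1 / \<alpha>^2 + (\<gamma> - 1)) = (s * (1 / \<alpha>^2 + (\<gamma> - 1))) * d^2"
        by (simp only: mult_ac)
      ultimately show ?thesis by simp
    qed
    finally show ?thesis .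
  qed
  then have "\<gamma> * (q^2 + (\<gamma> - 1) * e^2) \<le> \<gamma> * ((1 - (2 - \<gamma>) * s) * d^2)"
    using \<gamma> by (simp add: mult_left_mono)
  then show ?thesis by (simp add: s_def field_simps power2_eq_square)
qed

context spd_operator
begin

lemma relaxed_normM_le:
  assumes "(normM M (p - zs))^2 + (normM M (z - p))^2 \<le> (normM M (z - zs))^2"
    and "0 \<le> \<gamma>" "\<gamma> \<le> 2"
  shows "normM M ((1 - \<gamma>) *\<^sub>R z + \<gamma> *\<^sub>R p - zs) \<le> normM M (z - zs)"
proof -
  have "(1 - \<gamma>) *\<^sub>R z + \<gamma> *\<^sub>R p - zs = (1 - \<gamma>) *\<^sub>R (z - zs) + \<gamma> *\<^sub>R (p - zs)"
    by (simp add: algebra_simps)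
  then have "(normM M ((1 - \<gamma>) *\<^sub>R z + \<gamma> *\<^sub>R p - zs))^2 =
      (1 - \<gamma>) * (normM M (z - zs))^2 + \<gamma> * (normM M (p - zs))^2 - \<gamma> * (1 - \<gamma>) * (normM M (z - p))^2"
    by (simp add: normM_sq_affine_combination)
  also have "\<dots> \<le> (normM M (z - zs))^2 - \<gamma> * (2 - \<gamma>) * (normM M (z - p))^2"
    using mult_left_mono[OF assms(1) assms(2)] by (simp add: algebra_simps)
  also have "\<dots> \<le> (normM M (z - zs))^2" using assms(2,3) by simp
  finally show ?thesis using normM_nonneg by (rule power2_le_imp_le)
qed

lemma underrelaxed_distM_sq_le:
  assumes \<Omega>: "closed \<Omega>" "convex \<Omega>" "\<Omega> \<noteq> {}" and \<gamma>: "0 \<le> \<gamma>" "\<gamma> \<le> 1"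
  shows "(distM M ((1 - \<gamma>) *\<^sub>R z + \<gamma> *\<^sub>R p) \<Omega>)^2 \<le> (1 - \<gamma>) * (distM M z \<Omega>)^2 + \<gamma> * (distM M p \<Omega>)^2"
proof -
  obtain zb where zb: "zb \<in> \<Omega>" "normM M (zb - z) = distM M z \<Omega>" using distM_attained[OF \<Omega>(1,3)] .
  obtain pb where pb: "pb \<in> \<Omega>" "normM M (pb - p) = distM M p \<Omega>" using distM_attained[OF \<Omega>(1,3)] .
  define zs where "zs = (1 - \<gamma>) *\<^sub>R zb + \<gamma> *\<^sub>R pb"
  have "zs \<in> \<Omega>" unfolding zs_def using \<gamma> by (intro convexD[OF \<Omega>(2) zb(1) pb(1)]) auto
  then have "distM M ((1 - \<gamma>) *\<^sub>R z + \<gamma> *\<^sub>R p) \<Omega> \<le> normM M (zs - ((1 - \<gamma>) *\<^sub>R z + \<gamma> *\<^sub>R p))"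
    by (rule distM_le)
  then have "(distM M ((1 - \<gamma>) *\<^sub>R z + \<gamma> *\<^sub>R p) \<Omega>)^2 \<le> (normM M (zs - ((1 - \<gamma>) *\<^sub>R z + \<gamma> *\<^sub>R p)))^2"
    using distM_nonneg[OF \<Omega>(1,3)] by (simp add: power_mono)
  also have "zs - ((1 - \<gamma>) *\<^sub>R z + \<gamma> *\<^sub>R p) = (1 - \<gamma>) *\<^sub>R (zb - z) + \<gamma> *\<^sub>R (pb - p)"
    by (simp add: zs_def algebra_simps)
  also have "(normM M \<dots>)^2 \<le> (1 - \<gamma>) * (normM M (zb - z))^2 + \<gamma> * (normM M (pb - p))^2"
    unfolding normM_sq_affine_combination using \<gamma> by simp
  finally show ?thesis using zb pb by simp
qed

lemma overrelaxed_distM_sq_le: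
  assumes \<Omega>: "closed \<Omega>" "\<Omega> \<noteq> {}" and \<gamma>: "1 \<le> \<gamma>"
  shows "(distM M ((1 - \<gamma>) *\<^sub>R z + \<gamma> *\<^sub>R p) \<Omega>)^2
    \<le> (1 - \<gamma>) * (distM M z \<Omega>)^2 + \<gamma> * ((distM M p \<Omega>)^2 + (\<gamma> - 1) * (normM M (z - p))^2)"
proof -
  obtain pb where pb: "pb \<in> \<Omega>" "normM M (pb - p) = distM M p \<Omega>" using distM_attained[OF \<Omega>] .
  have "distM M ((1 - \<gamma>) *\<^sub>R z + \<gamma> *\<^sub>R p) \<Omega> \<le> normM M (pb - ((1 - \<gamma>) *\<^sub>R z + \<gamma> *\<^sub>R p))"
    using pb(1) by (rule distM_le)
  then have "(distM M ((1 - \<gamma>) *\<^sub>R z + \<gamma> *\<^sub>R p) \<Omega>)^2 \<le> (normM M (pb - ((1 - \<gamma>) *\<^sub>R z + \<gamma> *\<^sub>R p)))^2"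
    using distM_nonneg[OF \<Omega>] by (simp add: power_mono)
  also have "pb - ((1 - \<gamma>) *\<^sub>R z + \<gamma> *\<^sub>R p) = (1 - \<gamma>) *\<^sub>R (pb - z) + \<gamma> *\<^sub>R (pb - p)"
    by (simp add: algebra_simps)
  also have "(normM M \<dots>)^2 = (1 - \<gamma>) * (normM M (pb - z))^2 + \<gamma> * (normM M (pb - p))^2
      + \<gamma> * (\<gamma> - 1) * (normM M (z - p))^2"
    using normM_sq_affine_combination[of \<gamma> "pb - z" "pb - p"] normM_minus_commute[of p z]
    by (simp add: algebra_simps)
  also have "(1 - \<gamma>) * (normM M (pb - z))^2 \<le> (1 - \<gamma>) * (distM M z \<Omega>)^2"
    using \<gamma> distM_le[OF pb(1), of z] distM_nonneg[OF \<Omega>]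
    by (intro mult_left_mono_neg power_mono) auto
  finally show ?thesis using pb by (simp add: algebra_simps)
qed

lemma relaxed_step_distM_le:
  assumes \<Omega>: "closed \<Omega>" "convex \<Omega>" "\<Omega> \<noteq> {}" and \<gamma>: "0 < \<gamma>" "\<gamma> < 2" and \<alpha>: "0 < \<alpha>"
    and fqne: "\<And>zs. zs \<in> \<Omega> \<Longrightarrow> (normM M (p - zs))^2 + (normM M (z - p))^2 \<le> (normM M (z - zs))^2"
    and subreg: "\<alpha> * distM M p \<Omega> \<le> normM M (z - p)"
  shows "distM M ((1 - \<gamma>) *\<^sub>R z + \<gamma> *\<^sub>R p) \<Omega> \<le> relaxed_ppa_rate \<gamma> \<alpha> * distM M z \<Omega>"
proof -
  define d q e where "d = distM M z \<Omega>" and "q = distM M p \<Omega>" and "e = normM M (z - p)"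
  have d0: "0 \<le> d" and q0: "0 \<le> q"
    using distM_nonneg[OF \<Omega>(1,3)] by (auto simp: d_def q_def)
  obtain zb where zb: "zb \<in> \<Omega>" "normM M (zb - z) = d"
    unfolding d_def by (rule distM_attained[OF \<Omega>(1,3)])
  have "q^2 \<le> (normM M (p - zb))^2"
    using distM_le[OF zb(1), of p] q0 normM_minus_commute[of p zb] by (simp add: q_def power_mono)
  then have h1: "q^2 \<le> d^2 - e^2"
    using fqne[OF zb(1)] zb(2) normM_minus_commute[of z zb] by (simp add: e_def)
  have h2: "\<alpha>^2 * q^2 \<le> e^2"
    using power_mono[OF subreg] \<alpha> q0 by (simp add: q_def e_def power_mult_distrib)
  have "(distM M ((1 - \<gamma>) *\<^sub>R z + \<gamma> *\<^sub>R p) \<Omega>)^2 \<le> (relaxed_ppa_rate \<gamma> \<alpha>)^2 * d^2"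
  proof (cases "\<gamma> \<le> 1")
    case True
    then have "min \<gamma> (2 * \<gamma> - \<gamma>^2) = \<gamma>" using \<gamma> by (simp add: min_def power2_eq_square)
    then have rate: "(relaxed_ppa_rate \<gamma> \<alpha>)^2 = 1 - \<gamma> * \<alpha>^2 / (\<alpha>^2 + 1)"
      using relaxed_ppa_rate_radicand_nonneg[of \<gamma> \<alpha>] by (simp add: relaxed_ppa_rate_def)
    show ?thesis
      unfolding rate using underrelaxed_distM_sq_le[OF \<Omega> _ True, of z p] \<gamma>(1)
        underrelaxed_rate_bound[OF _ True h1 h2] by (simp add: d_def q_def)
  next
    case False
    then have "min \<gamma> (2 * \<gamma> - \<gamma>^2) = 2 * \<gamma> - \<gamma>^2" by (simp add: min_def power2_eq_square)
    then have rate: "(relaxed_ppa_rate \<gamma> \<alpha>)^2 = 1 - (2 * \<gamma> - \<gamma>^2) * \<alpha>^2 / (\<alpha>^2 + 1)"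
      using relaxed_ppa_rate_radicand_nonneg[of \<gamma> \<alpha>] by (simp add: relaxed_ppa_rate_def)
    show ?thesis
      unfolding rate using overrelaxed_distM_sq_le[OF \<Omega>(1,3), of \<gamma> z p] False
        overrelaxed_rate_bound[OF _ \<gamma>(2) \<alpha> h1 h2] by (simp add: d_def q_def e_def)
  qed
  then have "(distM M ((1 - \<gamma>) *\<^sub>R z + \<gamma> *\<^sub>R p) \<Omega>)^2 \<le> (relaxed_ppa_rate \<gamma> \<alpha> * d)^2"
    by (simp only: power_mult_distrib)
  then show ?thesis
    unfolding d_def[symmetric] by (rule power2_le_imp_le) (simp add: relaxed_ppa_rate_nonneg d0)
qed

lemma distM_le_infdist:
  assumes "lambda_max M = 1" and "S \<noteq> {}"
  shows "distM M x S \<le> infdist x S"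
  unfolding infdist_def using assms(2)
proof (simp, intro cINF_greatest)
  fix s assume "s \<in> S"
  then have "distM M x S \<le> normM M (s - x)" by (rule distM_le)
  also have "\<dots> \<le> norm (s - x)" by (rule normM_le_norm[OF assms(1)])
  finally show "distM M x S \<le> dist x s" by (simp add: dist_norm norm_minus_commute)
qed

lemma igppa_step_error:
  fixes z z' :: 'a
  assumes step: "igppa_step T M z \<sigma> \<eta> \<delta> \<gamma> z'" and \<gamma>: "0 \<le> \<gamma>" and \<delta>: "0 \<le> \<delta>" "\<delta> < 1"
  defines "p \<equiv> resolventM T M \<sigma> z"
  shows "normM M (z' - ((1 - \<gamma>) *\<^sub>R z + \<gamma> *\<^sub>R p)) \<le> \<gamma> * min \<eta> (\<delta> / (1 - \<delta>) * normM M (z - p))"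
proof -
  obtain w where z': "z' = \<gamma> *\<^sub>R w + (1 - \<gamma>) *\<^sub>R z"
    and w: "normM M (w - p) \<le> min \<eta> (\<delta> * normM M (w - z))"
    using step unfolding igppa_step_def p_def by blast
  have "normM M (w - p) \<le> \<delta> * normM M (w - z)" using w by simp
  also have "\<dots> \<le> \<delta> * (normM M (w - p) + normM M (z - p))"
    using normM_triangle_diff[of w z p] normM_minus_commute[of p z] \<delta> by (intro mult_left_mono) auto
  finally have "normM M (w - p) \<le> \<delta> / (1 - \<delta>) * normM M (z - p)"
    using \<delta> by (simp add: field_simps)
  then have "normM M (w - p) \<le> min \<eta> (\<delta> / (1 - \<delta>) * normM M (z - p))" using w by simp
  moreover have "z' - ((1 - \<gamma>) *\<^sub>R z + \<gamma> *\<^sub>R p) = \<gamma> *\<^sub>R (w - p)"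
    by (simp add: z' algebra_simps)
  ultimately show ?thesis using \<gamma> by (simp add: normM_scaleR mult_left_mono)
qed

lemma igppa_step_fejer:
  assumes mm: "maximal_monotone T" and \<sigma>: "0 < \<sigma>" and \<gamma>: "0 < \<gamma>" "\<gamma> < 2"
    and \<delta>: "0 \<le> \<delta>" "\<delta> < 1" and zs: "zs \<in> zeros T" and step: "igppa_step T M z \<sigma> \<eta> \<delta> \<gamma> z'"
  shows "normM M (z' - zs) \<le> normM M (z - zs) + \<gamma> * \<eta>"
proof -
  define zg where "zg = (1 - \<gamma>) *\<^sub>R z + \<gamma> *\<^sub>R resolventM T M \<sigma> z"
  have "normM M (z' - zs) \<le> normM M (z' - zg) + normM M (zg - zs)" by (rule normM_triangle_diff)
  also have "normM M (z' - zg) \<le> \<gamma> * min \<eta> (\<delta> / (1 - \<delta>) * normM M (z - resolventM T M \<sigma> z))"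
    unfolding zg_def using \<gamma>(1) by (intro igppa_step_error[OF step _ \<delta>]) simp
  also have "\<dots> \<le> \<gamma> * \<eta>" using \<gamma>(1) by (intro mult_left_mono) simp_all
  also have "normM M (zg - zs) \<le> normM M (z - zs)"
    unfolding zg_def using resolventM_firmly_quasi_nonexpansive[OF mm \<sigma> zs] \<gamma>
    by (intro relaxed_normM_le) auto
  finally show ?thesis by simp
qed

lemma subregular_distM_resolventM_le:
  fixes z :: 'a
  assumes mm: "maximal_monotone T" and ne: "zeros T \<noteq> {}" and lmax: "lambda_max M = 1"
    and \<sigma>: "0 < \<sigma>" and \<kappa>: "0 \<le> \<kappa>" and subreg: "subreg_on_ball T r \<kappa>"
  defines "p \<equiv> resolventM T M \<sigma> z"
  assumes ball: "norm p \<le> r"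
  shows "\<sigma> * distM M p (zeros T) \<le> \<kappa> * normM M (z - p)"
proof -
  have graph: "M ((1 / \<sigma>) *\<^sub>R (z - p)) \<in> T p"
    unfolding p_def by (rule resolventM_in_graph[OF mm \<sigma>])
  have "distM M p (zeros T) \<le> infdist p (zeros T)" by (rule distM_le_infdist[OF lmax ne])
  also have "\<dots> \<le> \<kappa> * infdist 0 (T p)"
    using subreg ball graph unfolding subreg_on_ball_def by blast
  also have "infdist 0 (T p) \<le> norm (M ((1 / \<sigma>) *\<^sub>R (z - p)))"
    using infdist_le[OF graph, of 0] by simp
  also have "\<dots> \<le> normM M (z - p) / \<sigma>"
    using norm_M_le_normM[OF lmax, of "z - p"] \<sigma> by (simp add: M_linear_simps divide_right_mono)
  finally have "distM M p (zeros T) \<le> \<kappa> * (normM M (z - p) / \<sigma>)"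
    using \<kappa> by (simp add: mult_left_mono)
  then show ?thesis using \<sigma> by (simp add: field_simps)
qed

lemma igppa_step_distM_le:
  assumes mm: "maximal_monotone T" and ne: "zeros T \<noteq> {}" and lmax: "lambda_max M = 1"
    and \<gamma>: "0 < \<gamma>" "\<gamma> < 2" and \<delta>: "0 \<le> \<delta>" "\<delta> < 1" and \<kappa>: "0 < \<kappa>" and \<alpha>: "0 < \<alpha>"
    and \<sigma>: "\<kappa> * \<alpha> \<le> \<sigma>" and subreg: "subreg_on_ball T r \<kappa>"
    and ball: "norm (resolventM T M \<sigma> z) \<le> r" and step: "igppa_step T M z \<sigma> \<eta> \<delta> \<gamma> z'"
  shows "distM M z' (zeros T) \<le> igppa_rate \<gamma> \<delta> \<alpha> * distM M z (zeros T)"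
proof -
  define \<Omega> p d where "\<Omega> = zeros T" and "p = resolventM T M \<sigma> z" and "d = distM M z \<Omega>"
  define zg where "zg = (1 - \<gamma>) *\<^sub>R z + \<gamma> *\<^sub>R p"
  have \<Omega>: "closed \<Omega>" "convex \<Omega>" "\<Omega> \<noteq> {}"
    using closed_zeros[OF mm] convex_zeros[OF mm] ne by (simp_all add: \<Omega>_def)
  have "0 < \<kappa> * \<alpha>" using \<kappa> \<alpha> by simp
  then have \<sigma>0: "0 < \<sigma>" using \<sigma> by linarith
  have fqne: "(normM M (p - zs))^2 + (normM M (z - p))^2 \<le> (normM M (z - zs))^2" if "zs \<in> \<Omega>" for zs
    using resolventM_firmly_quasi_nonexpansive[OF mm \<sigma>0] that by (simp add: \<Omega>_def p_def)
  have "\<kappa> * \<alpha> * distM M p \<Omega> \<le> \<sigma> * distM M p \<Omega>"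
    using \<sigma> distM_nonneg[OF \<Omega>(1,3)] by (rule mult_right_mono)
  also have "\<dots> \<le> \<kappa> * normM M (z - p)"
    unfolding \<Omega>_def p_def using \<kappa> ball
    by (intro subregular_distM_resolventM_le[OF mm ne lmax \<sigma>0 _ subreg]) simp_all
  finally have subreg_p: "\<alpha> * distM M p \<Omega> \<le> normM M (z - p)" using \<kappa> by (simp add: mult.assoc)
  have exact: "distM M zg \<Omega> \<le> relaxed_ppa_rate \<gamma> \<alpha> * d"
    unfolding zg_def d_def by (rule relaxed_step_distM_le[OF \<Omega> \<gamma> \<alpha> fqne subreg_p])
  have "normM M (z' - zg) \<le> \<gamma> * min \<eta> (\<delta> / (1 - \<delta>) * normM M (z - p))"
    unfolding zg_def p_def using \<gamma>(1) by (intro igppa_step_error[OF step _ \<delta>]) simp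
  also have "\<dots> \<le> \<gamma> * (\<delta> / (1 - \<delta>) * d)"
    using \<gamma>(1) \<delta> resolventM_residual_le_distM[OF mm ne \<sigma>0, of z]
    by (intro mult_left_mono min.coboundedI2) (simp_all add: \<Omega>_def p_def d_def)
  finally have inexact: "normM M (z' - zg) \<le> \<gamma> * \<delta> / (1 - \<delta>) * d" by simp
  have d0: "0 \<le> d" unfolding d_def by (rule distM_nonneg[OF \<Omega>(1,3)])
  have "distM M z' \<Omega> \<le> distM M zg \<Omega> + normM M (z' - zg)"
    by (rule distM_le_distM_add[OF \<Omega>(1,3)])
  also have "\<dots> \<le> (relaxed_ppa_rate \<gamma> \<alpha> + \<gamma> * \<delta> / (1 - \<delta>)) * d"
    using add_mono[OF exact inexact] by (simp add: distrib_right)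
  also have "\<dots> \<le> igppa_rate \<gamma> \<delta> \<alpha> * d"
    using relaxed_ppa_rate_add_error_le_igppa_rate[OF \<gamma> \<delta>] d0 by (rule mult_right_mono)
  finally show ?thesis by (simp add: \<Omega>_def d_def)
qed

lemma igppa_iterates_normM_le:
  assumes mm: "maximal_monotone T" and \<sigma>: "\<And>k. 0 < \<sigma> k" and \<gamma>: "0 < \<gamma>" "\<gamma> < 2"
    and \<delta>: "0 \<le> \<delta>" "\<delta> < 1" and steps: "\<And>k. igppa_step T M (z k) (\<sigma> k) (\<eta> k) \<delta> \<gamma> (z (Suc k))"
    and zs: "zs \<in> zeros T" and \<eta>: "\<And>k. 0 \<le> \<eta> k" "summable \<eta>"
  shows "normM M (z k - zs) \<le> normM M (z 0 - zs) + \<gamma> * suminf \<eta>"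
proof -
  have "normM M (z k - zs) \<le> normM M (z 0 - zs) + \<gamma> * (\<Sum>j<k. \<eta> j)"
  proof (induction k)
    case (Suc k)
    have "normM M (z (Suc k) - zs) \<le> normM M (z k - zs) + \<gamma> * \<eta> k"
      by (rule igppa_step_fejer[OF mm \<sigma> \<gamma> \<delta> zs steps])
    then show ?case unfolding sum.lessThan_Suc distrib_left using Suc.IH by linarith
  qed simp
  also have "\<gamma> * (\<Sum>j<k. \<eta> j) \<le> \<gamma> * suminf \<eta>"
    using sum_le_suminf[OF \<eta>(2), of "{..<k}"] \<eta>(1) \<gamma> by simp
  finally show ?thesis by simp
qed

lemma norm_resolventM_le:
  assumes mm: "maximal_monotone T" and lmax: "lambda_max M = 1" and \<sigma>: "0 < \<sigma>"
    and zs: "zs \<in> zeros T"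
  shows "norm (resolventM T M \<sigma> z) \<le> norm zs + normM M (z - zs) / lambda_min M"
proof -
  define p where "p = resolventM T M \<sigma> z"
  have "normM M (p - zs) \<le> normM M (z - zs)"
    unfolding p_def by (rule normM_resolventM_le[OF mm \<sigma> zs])
  then have "lambda_min M * norm (p - zs) \<le> normM M (z - zs)"
    using lambda_min_norm_le_normM[OF lmax, of "p - zs"] by linarith
  then have "norm (p - zs) \<le> normM M (z - zs) / lambda_min M"
    using lambda_min_pos by (simp add: field_simps)
  then show ?thesis using norm_triangle_sub[of p zs] by (simp add: p_def)
qed

lemma igppa_norm_resolventM_le:
  assumes mm: "maximal_monotone T" and lmax: "lambda_max M = 1" and \<sigma>: "\<And>k. 0 < \<sigma> k"
    and \<gamma>: "0 < \<gamma>" "\<gamma> < 2" and \<delta>: "0 \<le> \<delta>" "\<delta> < 1"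
    and steps: "\<And>k. igppa_step T M (z k) (\<sigma> k) (\<eta> k) \<delta> \<gamma> (z (Suc k))"
    and zs: "zs \<in> zeros T" and \<eta>: "\<And>k. 0 \<le> \<eta> k" "summable \<eta>"
  shows "norm (resolventM T M (\<sigma> k) (z k))
    \<le> norm zs + (normM M (z 0 - zs) + \<gamma> * suminf \<eta>) / lambda_min M"
proof -
  have "norm (resolventM T M (\<sigma> k) (z k)) \<le> norm zs + normM M (z k - zs) / lambda_min M"
    by (rule norm_resolventM_le[OF mm lmax \<sigma> zs])
  also have "\<dots> \<le> norm zs + (normM M (z 0 - zs) + \<gamma> * suminf \<eta>) / lambda_min M"
    using igppa_iterates_normM_le[OF mm \<sigma> \<gamma> \<delta> steps zs \<eta>] lambda_min_pos
    by (simp add: divide_right_mono)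
  finally show ?thesis .
qed

end

lemma geometric_decay_bound:
  fixes a :: "nat \<Rightarrow> real"
  assumes "0 \<le> \<rho>" and "\<And>k. a (Suc k) \<le> \<rho> * a k"
  shows "a k \<le> \<rho> ^ k * a 0"
proof (induction k)
  case (Suc k)
  have "a (Suc k) \<le> \<rho> * a k" by (rule assms(2))
  also have "\<dots> \<le> \<rho> * (\<rho> ^ k * a 0)" using Suc assms(1) by (rule mult_left_mono)
  finally show ?case by (simp add: mult.assoc)
qed simp

theorem corollary1:
  fixes T :: "'a::euclidean_space \<Rightarrow> 'a set" and M :: "'a \<Rightarrow> 'a"
    and z :: "nat \<Rightarrow> 'a" and \<sigma> \<eta> :: "nat \<Rightarrow> real"
    and \<gamma> \<delta> r \<kappa> \<alpha> :: real and zbar0 :: 'a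
  assumes T_mm: "maximal_monotone T" and Omega_ne: "zeros T \<noteq> {}"
    and M_pd: "self_adjoint_pd M" and M_max: "lambda_max M = 1"
    and gamma: "0 < \<gamma>" "\<gamma> < 2" and delta: "0 \<le> \<delta>" "\<delta> < 1/2"
    and sigma_nn: "\<forall>k. 0 \<le> \<sigma> k" and eta_nn: "\<forall>k. 0 \<le> \<eta> k"
    and eta_sum: "summable \<eta>" and sigma_inf: "(INF k. \<sigma> k) > 0"
    and steps: "\<forall>k. igppa_step T M (z k) (\<sigma> k) (\<eta> k) \<delta> \<gamma> (z (Suc k))"
    and bms: "bounded_metric_subregular T"
    and zbar0: "zbar0 \<in> zeros T" "normM M (zbar0 - z 0) = distM M (z 0) (zeros T)"
    and r: "r \<ge> norm zbar0 + (1 / lambda_min M) * (distM M (z 0) (zeros T) + \<gamma> * suminf \<eta>)"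
    and kappa: "\<kappa> > 0" "subreg_on_ball T r \<kappa>"
    and alpha: "\<alpha> > 0"
    and rho: "(1 / (1 - \<delta>)) * (sqrt (1 - min \<gamma> (2 * \<gamma> - \<gamma>^2) * \<alpha>^2 / (\<alpha>^2 + 1))
               + \<delta> * (min \<gamma> 1 / sqrt (\<alpha>^2 + 1) + 1)) < 1"
    and sigma_ge: "\<forall>k. \<sigma> k \<ge> \<kappa> * \<alpha>"
  shows "\<forall>k. distM M (z k) (zeros T) \<le>
           ((1 / (1 - \<delta>)) * (sqrt (1 - min \<gamma> (2 * \<gamma> - \<gamma>^2) * \<alpha>^2 / (\<alpha>^2 + 1))
               + \<delta> * (min \<gamma> 1 / sqrt (\<alpha>^2 + 1) + 1))) ^ k * distM M (z 0) (zeros T)"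
proof -
  interpret spd_operator M by unfold_locales (rule M_pd)
  have \<delta>1: "\<delta> < 1" using delta(2) by simp
  have "0 < \<kappa> * \<alpha>" using kappa(1) alpha by simp
  then have \<sigma>: "0 < \<sigma> k" for k using sigma_ge by (meson less_le_trans)
  have "norm (resolventM T M (\<sigma> k) (z k)) \<le> r" for k
    using igppa_norm_resolventM_le[where k = k, OF T_mm M_max \<sigma> gamma delta(1) \<delta>1
        steps[rule_format] zbar0(1) eta_nn[rule_format] eta_sum] zbar0(2) r
      normM_minus_commute[of "z 0" zbar0] by simp
  then have "distM M (z (Suc k)) (zeros T) \<le> igppa_rate \<gamma> \<delta> \<alpha> * distM M (z k) (zeros T)" for k
    using igppa_step_distM_le[OF T_mm Omega_ne M_max gamma delta(1) \<delta>1 kappa(1) alpha _ kappa(2)]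
      sigma_ge steps by blast
  then have "distM M (z k) (zeros T) \<le> igppa_rate \<gamma> \<delta> \<alpha> ^ k * distM M (z 0) (zeros T)" for k
    by (rule geometric_decay_bound[OF igppa_rate_nonneg[OF gamma(1) delta(1) \<delta>1]])
  then show ?thesis unfolding igppa_rate_def relaxed_ppa_rate_def by blast
qed

end
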